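(* Let $\tilde\omega=\log^*\tilde\delta$, computed in the convolution algebra of $(\mathcal A,\diamond,\Delta_{\mathcal A})$. Then $\tilde\omega(\mathbf 1)=0$ and $\tilde\omega(x^s)=\frac{(-1)^{s+1}}{s}$ for $s\ge1$, and $$\omega=\tilde\omega\circ\Lambda,$$ where $\omega=\log^*\delta$ in the convolution algebra of $\mathcal H_{CK}$.
   Context: Let $k$ be a field of characteristic $0$. $\mathcal A=k[x]$ ($x^0=\mathbf 1$) with the quasi-shuffle product $\diamond$ determined by $\mathbf 1\diamond u=u\diamond\mathbf 1=u$, $x^k\diamond x^l=(x^{k-1}\diamond x^l)x+(x^k\diamond x^{l-1})x+(x^{k-1}\diamond x^{l-1})x$ for $k,l\ge1$, and the deconcatenation coproduct $\Delta_{\mathcal A}(x^n)=\sum_{r=0}^nx^r\otimes x^{n-r}$, is a connected graded Hopf algebra with counit $\varepsilon_{\mathcal A}$. $\tilde\delta:\mathcal A\to k$ is linear with $\tilde\delta(\mathbf 1)=\tilde\delta(x)=1$, $\tilde\delta(x^s)=0$ for $s\ge2$. $\mathcal H_{CK}$ is the Connes–Kreimer Hopf algebra of rooted forests (free commutative algebra on nonempty non-planar rooted trees, unit the empty forest, counit $\varepsilon$, coproduct by admissible cuts: $\Delta_{CK}(u)=\sum v\otimes w$ over decompositions of the vertex set of $u$ into $V\sqcup W$ such that no vertex of $V$ lies strictly below a vertex of $W$, $v,w$ the induced forests). $B_+$ grafts a forest onto a new root; $\Lambda:\mathcal H_{CK}\to\mathcal A$ is the unique unital algebra morphism with $\Lambda(B_+(t_1\cdots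 t_n))=(\Lambda(t_1)\diamond\cdots\diamond\Lambda(t_n))x$ (it is a Hopf algebra morphism). $\delta$ is the character of $\mathcal H_{CK}$ with $\delta(\bullet)=1$ and $\delta(t)=0$ for trees with at least two vertices. For a character $\chi$ of either Hopf algebra, $\log^*\chi=\sum_{n\ge1}\frac{(-1)^{n+1}}{n}(\chi-\text{counit})^{*n}$, with $*$ the convolution product. *)

theory Defs
  imports "HOL-Library.Multiset" "HOL-Computational_Algebra.Polynomial"
begin

text \<open>Elements of A are polynomials (the vector space k[x], basis x^n = monom 1 n).
  Linear functionals on A are represented by their values on the basis x^n,
  i.e. by functions nat => k.\<close>

fun qsh :: "nat \<Rightarrow> nat \<Rightarrow> 'k::field poly" where
  "qsh 0 l = monom 1 l"
| "qsh (Suc k) 0 = monom 1 (Suc k)"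
| "qsh (Suc k) (Suc l) = (qsh k (Suc l) + qsh (Suc k) l + qsh k l) * [:0, 1:]"

definition diamond :: "'k::field poly \<Rightarrow> 'k poly \<Rightarrow> 'k poly" where
  "diamond p q = (\<Sum>i\<le>degree p. \<Sum>j\<le>degree q. smult (coeff p i * coeff q j) (qsh i j))"

definition lin_ext :: "(nat \<Rightarrow> 'k::field) \<Rightarrow> 'k poly \<Rightarrow> 'k" where
  "lin_ext \<phi> p = (\<Sum>i\<le>degree p. coeff p i * \<phi> i)"

definition epsA :: "nat \<Rightarrow> 'k::field" where
  "epsA n = (if n = 0 then 1 else 0)"

definition convA :: "(nat \<Rightarrow> 'k::field) \<Rightarrow> (nat \<Rightarrow> 'k) \<Rightarrow> nat \<Rightarrow> 'k" where
  "convA \<phi> \<psi> n = (\<Sum>r\<le>n. \<phi> r * \<psi> (n - r))"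

primrec convA_pow :: "(nat \<Rightarrow> 'k::field) \<Rightarrow> nat \<Rightarrow> nat \<Rightarrow> 'k" where
  "convA_pow \<phi> 0 = epsA"
| "convA_pow \<phi> (Suc n) = convA \<phi> (convA_pow \<phi> n)"

text \<open>log^* chi = sum_{n>=1} (-1)^(n+1)/n (chi - eps)^{*n}, evaluated pointwise
  as the (locally finite) sum over the nonzero terms.\<close>
definition logA :: "(nat \<Rightarrow> 'k::field) \<Rightarrow> nat \<Rightarrow> 'k" where
  "logA \<chi> m = (let T = (\<lambda>n. ((-1) ^ (n + 1) / of_nat n) * convA_pow (\<lambda>u. \<chi> u - epsA u) n m)
               in \<Sum>n\<in>{n. 1 \<le> n \<and> T n \<noteq> 0}. T n)"

definition deltaA :: "nat \<Rightarrow> 'k::field" where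
  "deltaA s = (if s \<le> 1 then 1 else 0)"

text \<open>Non-planar rooted trees: a root with a multiset of subtrees (B_+ = Node).
  Forests (the monomial basis of H_CK) are multisets of trees; the empty forest is the unit.\<close>
datatype tree = Node "tree multiset"

type_synonym forest = "tree multiset"

text \<open>Multiplication of multisets of pairs (v,w) (the algebra structure of H_CK \<otimes> H_CK
  on basis elements).\<close>
definition mult_pairs :: "(forest \<times> forest) multiset \<Rightarrow> (forest \<times> forest) multiset \<Rightarrow> (forest \<times> forest) multiset" where
  "mult_pairs A B = sum_mset (image_mset (\<lambda>(v1, w1). image_mset (\<lambda>(v2, w2). (v1 + v2, w1 + w2)) B) A)"

text \<open>Admissible cuts: the multiset of pairs (v,w) over all decompositions V \<sqcup> W of the
  vertex set with no vertex of V strictly below a vertex of W.  For a tree B_+(f): either the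
  root is in V (then all vertices are in V), or the root is in W, and then V \<sqcup> W restricted to
  f is an arbitrary admissible decomposition of f.  For a forest the decompositions are
  independent on each tree.\<close>
primrec cop_tree :: "tree \<Rightarrow> (forest \<times> forest) multiset" where
  "cop_tree (Node f) =
     {# ({#Node f#}, {#}) #} +
     image_mset (\<lambda>(v, w). (v, {#Node w#}))
       (fold_mset mult_pairs {# ({#}, {#}) #} (image_mset cop_tree f))"

definition cop_forest :: "forest \<Rightarrow> (forest \<times> forest) multiset" where
  "cop_forest u = fold_mset mult_pairs {# ({#}, {#}) #} (image_mset cop_tree u)"

text \<open>Linear functionals on H_CK are represented by their values on forests.\<close>
definition epsCK :: "forest \<Rightarrow> 'k::field" where
  "epsCK u = (if u = {#} then 1 else 0)"

definition convCK :: "(forest \<Rightarrow> 'k::field) \<Rightarrow> (forest \<Rightarrow> 'k) \<Rightarrow> forest \<Rightarrow> 'k" where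
  "convCK \<phi> \<psi> u = sum_mset (image_mset (\<lambda>(v, w). \<phi> v * \<psi> w) (cop_forest u))"

primrec convCK_pow :: "(forest \<Rightarrow> 'k::field) \<Rightarrow> nat \<Rightarrow> forest \<Rightarrow> 'k" where
  "convCK_pow \<phi> 0 = epsCK"
| "convCK_pow \<phi> (Suc n) = convCK \<phi> (convCK_pow \<phi> n)"

definition logCK :: "(forest \<Rightarrow> 'k::field) \<Rightarrow> forest \<Rightarrow> 'k" where
  "logCK \<chi> u = (let T = (\<lambda>n. ((-1) ^ (n + 1) / of_nat n) * convCK_pow (\<lambda>v. \<chi> v - epsCK v) n u)
               in \<Sum>n\<in>{n. 1 \<le> n \<and> T n \<noteq> 0}. T n)"

definition delta_tree :: "tree \<Rightarrow> 'k::field" where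
  "delta_tree t = (if t = Node {#} then 1 else 0)"

definition deltaCK :: "forest \<Rightarrow> 'k::field" where
  "deltaCK u = prod_mset (image_mset delta_tree u)"

primrec Lambda_tree :: "tree \<Rightarrow> 'k::field poly" where
  "Lambda_tree (Node f) = fold_mset diamond 1 (image_mset Lambda_tree f) * [:0, 1:]"

definition Lambda :: "forest \<Rightarrow> 'k::field poly" where
  "Lambda u = fold_mset diamond 1 (image_mset Lambda_tree u)"

end

theory Submission
  imports Defs
begin

text \<open>
  Evaluate a polynomial in the binomial (Newton) basis:
  binom_eval p N = \<Sum>n. coeff p n * (N choose n).  This map is injective,
  sends the quasi-shuffle product to the pointwise product (x^k \<diamond> x^l evaluates to
  (N choose k)(N choose l)), sends multiplication by x to a partial sum over N, and
  sends the deconcatenation coproduct to the shift N + M (Vandermonde).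

  Consequently (A, \<diamond>) is commutative and associative, so Lambda is well defined on
  forests, and evaluating Lambda along the recursion B_+ shows that Lambda is a coalgebra
  morphism: coeff (Lambda u) (r + s) is the sum over admissible cuts (v, w) of u of
  coeff (Lambda v) r * coeff (Lambda w) s.  On the other hand delta - eps on H_CK is
  u \<mapsto> coeff (Lambda u) 1, so by induction the n-th convolution power of delta - eps
  is u \<mapsto> coeff (Lambda u) n; likewise on A the n-th power of deltaA - epsA is the
  indicator of x^n.  Both logarithms are then finite sums with the same coefficients
  (-1)^(n+1)/n, which gives the three claims of the theorem.
\<close>

subsection \<open>Evaluation in the binomial basis\<close>

definition binom_eval :: "'k::field poly \<Rightarrow> nat \<Rightarrow> 'k" where
  "binom_eval p N = (\<Sum>n\<le>N. coeff p n * of_nat (N choose n))"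

lemma binom_eval_add: "binom_eval (p + q) N = binom_eval p N + binom_eval q N"
  by (simp add: binom_eval_def algebra_simps sum.distrib)

lemma binom_eval_smult: "binom_eval (smult c p) N = c * binom_eval p N"
  by (simp add: binom_eval_def algebra_simps sum_distrib_left)

lemma binom_eval_sum: "binom_eval (\<Sum>i\<in>I. f i) N = (\<Sum>i\<in>I. binom_eval (f i) N)"
proof (induction I rule: infinite_finite_induct)
  case (insert x F)
  then show ?case by (simp add: binom_eval_add)
qed (simp_all add: binom_eval_def)

lemma binom_eval_monom: "binom_eval (monom 1 l) N = of_nat (N choose l)"
proof (cases "l \<le> N")
  case True
  have "binom_eval (monom 1 l) N = (\<Sum>n\<le>N. if l = n then of_nat (N choose n) else 0)"
    unfolding binom_eval_def by (rule sum.cong) (auto simp: coeff_monom)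
  then show ?thesis using True by simp
qed (simp add: binom_eval_def coeff_monom binomial_eq_0)

lemma binom_eval_one: "binom_eval 1 N = 1"
  using binom_eval_monom[of 0 N] by (simp add: one_pCons monom_0)

lemma binom_eval_0: "binom_eval p 0 = coeff p 0"
  by (simp add: binom_eval_def)

lemma binom_eval_1: "binom_eval p 1 = coeff p 0 + coeff p 1"
  by (simp add: binom_eval_def)

lemma binom_eval_degree_bound:
  assumes "degree p \<le> D"
  shows "binom_eval p N = (\<Sum>n\<le>D. coeff p n * of_nat (N choose n))"
proof -
  have "binom_eval p N = (\<Sum>n\<le>max N D. coeff p n * of_nat (N choose n))"
    unfolding binom_eval_def by (rule sum.mono_neutral_left) (auto simp: binomial_eq_0)
  also have "\<dots> = (\<Sum>n\<le>D. coeff p n * of_nat (N choose n))"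
    using assms by (intro sum.mono_neutral_right) (auto simp: coeff_eq_0)
  finally show ?thesis .
qed

text \<open>Multiplication by x becomes summation: p x evaluates at N to \<Sum>K<N of p at K
  (Pascal's rule).\<close>
lemma binom_eval_times_x: "binom_eval (p * [:0, 1:]) N = (\<Sum>K<N. binom_eval p K)"
proof (induction N)
  case 0
  then show ?case by (simp add: binom_eval_0)
next
  case (Suc N)
  have "binom_eval (p * [:0, 1:]) (Suc N)
      = (\<Sum>n\<le>N. coeff p n * of_nat (Suc N choose Suc n))"
    unfolding binom_eval_def by (subst sum.atMost_Suc_shift) simp
  also have "\<dots> = (\<Sum>n\<le>N. coeff p n * of_nat (N choose n))
      + (\<Sum>n\<le>N. coeff p n * of_nat (N choose Suc n))"
    by (simp add: algebra_simps sum.distrib)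
  also have "(\<Sum>n\<le>N. coeff p n * of_nat (N choose Suc n))
      = (\<Sum>n\<le>Suc N. coeff (p * [:0, 1:]) n * of_nat (N choose n))"
    by (subst sum.atMost_Suc_shift) simp
  also have "\<dots> = binom_eval (p * [:0, 1:]) N"
    unfolding binom_eval_def by (simp add: binomial_eq_0)
  finally show ?case using Suc by (simp add: binom_eval_def)
qed

text \<open>Values at all N determine the coefficients in the binomial basis
  (the matrix (N choose n) is unitriangular).\<close>
lemma binomial_coeffs_zero:
  assumes "\<And>N. (\<Sum>n\<le>N. a n * of_nat (N choose n)) = (0::'k::field)"
  shows "a n = 0"
proof (induction n rule: less_induct)
  case (less n)
  have "0 = (\<Sum>m\<le>n. a m * of_nat (n choose m))" using assms by simp
  also have "\<dots> = (\<Sum>m<n. a m * of_nat (n choose m)) + a n"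
    by (simp add: lessThan_Suc_atMost[symmetric])
  finally show ?case using less by simp
qed

lemma binom_eval_inj:
  assumes "\<And>N. binom_eval p N = binom_eval q N"
  shows "p = q"
proof (rule poly_eqI)
  fix n
  have "coeff p n - coeff q n = 0"
    by (rule binomial_coeffs_zero[where a = "\<lambda>n. coeff p n - coeff q n"])
       (use assms in \<open>simp add: binom_eval_def algebra_simps sum_subtractf\<close>)
  then show "coeff p n = coeff q n" by simp
qed

subsection \<open>The quasi-shuffle product is the pointwise product of evaluations\<close>

lemma binomial_qsh_recurrence:
  "(\<Sum>K<N. (K choose k) * (K choose Suc l) + (K choose Suc k) * (K choose l)
           + (K choose k) * (K choose l))
   = (N choose Suc k) * (N choose Suc l)"
  by (induction N) (simp_all add: algebra_simps)

lemma binom_eval_qsh: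
  "binom_eval (qsh k l :: 'k::field poly) N = of_nat (N choose k) * of_nat (N choose l)"
proof (induction k l arbitrary: N rule: qsh.induct)
  case (3 k l)
  have "binom_eval (qsh (Suc k) (Suc l) :: 'k poly) N
      = (\<Sum>K<N. of_nat ((K choose k) * (K choose Suc l) + (K choose Suc k) * (K choose l)
                        + (K choose k) * (K choose l)))"
    by (simp only: qsh.simps binom_eval_times_x binom_eval_add 3 of_nat_add of_nat_mult
                   sum.distrib)
  also have "\<dots> = of_nat ((N choose Suc k) * (N choose Suc l))"
    by (simp only: of_nat_sum[symmetric] binomial_qsh_recurrence)
  finally show ?case by simp
qed (simp_all add: binom_eval_monom)

lemma binom_eval_diamond: "binom_eval (diamond p q) N = binom_eval p N * binom_eval q N"
proof -
  have "binom_eval (diamond p q) N = (\<Sum>i\<le>degree p. \<Sum>j\<le>degree q.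
          coeff p i * coeff q j * (of_nat (N choose i) * of_nat (N choose j)))"
    unfolding diamond_def by (simp add: binom_eval_sum binom_eval_smult binom_eval_qsh)
  also have "\<dots> = binom_eval p N * binom_eval q N"
    by (simp add: binom_eval_degree_bound[OF order_refl] sum_product algebra_simps)
  finally show ?thesis .
qed

lemma diamond_commute: "diamond p q = diamond q p"
  by (rule binom_eval_inj) (simp add: binom_eval_diamond)

lemma diamond_assoc: "diamond (diamond p q) r = diamond p (diamond q r)"
  by (rule binom_eval_inj) (simp add: binom_eval_diamond)

lemma diamond_one: "diamond p 1 = p"
  by (rule binom_eval_inj) (simp add: binom_eval_diamond binom_eval_one)

interpretation diamond: comp_fun_commute "diamond :: 'k::field poly \<Rightarrow> _"
  by unfold_locales (simp add: fun_eq_iff, metis diamond_assoc diamond_commute)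

definition binom_eval2 :: "(nat \<Rightarrow> nat \<Rightarrow> 'k::field) \<Rightarrow> nat \<Rightarrow> nat \<Rightarrow> 'k" where
  "binom_eval2 c N M = (\<Sum>r\<le>N. \<Sum>s\<le>M. c r s * (of_nat (N choose r) * of_nat (M choose s)))"

lemma binom_eval2_inj:
  assumes "\<And>N M. binom_eval2 c N M = binom_eval2 d N M"
  shows "c r s = d r s"
proof -
  define e where "e r s = c r s - d r s" for r s
  have e: "(\<Sum>r\<le>N. (\<Sum>s\<le>M. e r s * of_nat (M choose s)) * of_nat (N choose r)) = 0" for N M
    using assms[of N M]
    by (simp add: binom_eval2_def e_def sum_distrib_left sum_distrib_right sum_subtractf
                  algebra_simps)
  have "(\<Sum>s\<le>M. e r s * of_nat (M choose s)) = 0" for M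
    by (rule binomial_coeffs_zero[where a = "\<lambda>r. \<Sum>s\<le>M. e r s * of_nat (M choose s)"]) (rule e)
  then have "e r s = 0" by (rule binomial_coeffs_zero)
  then show ?thesis by (simp add: e_def)
qed

text \<open>Vandermonde's identity: evaluating at N + M corresponds to the deconcatenation
  coproduct x^n \<mapsto> \<Sum>(r+s=n) x^r \<otimes> x^s.\<close>
lemma binom_eval_shift:
  "binom_eval p (N + M) = binom_eval2 (\<lambda>r s. coeff p (r + s)) N M"
proof -
  define g where "g r s = coeff p (r + s) * (of_nat (N choose r) * of_nat (M choose s))" for r s
  have vandermonde': "(of_nat ((N + M) choose n) :: 'a) =
      (\<Sum>r\<le>n. of_nat (N choose r) * of_nat (M choose (n - r)))" for n
    by (simp only: vandermonde[symmetric] of_nat_sum of_nat_mult)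
  have "binom_eval p (N + M) = (\<Sum>n\<le>N + M. \<Sum>r\<le>n. g r (n - r))"
    unfolding binom_eval_def g_def vandermonde' by (simp add: sum_distrib_left)
  also have "\<dots> = (\<Sum>(r, s)\<in>{(r, s). r + s \<le> N + M}. g r s)"
    by (rule sum.triangle_reindex_eq[symmetric])
  also have "\<dots> = (\<Sum>(r, s)\<in>{..N} \<times> {..M}. g r s)"
  proof (rule sum.mono_neutral_right)
    show "finite {(r, s). r + s \<le> N + M}"
      by (rule finite_subset[of _ "{..N + M} \<times> {..N + M}"]) auto
    show "\<forall>i\<in>{(r, s). r + s \<le> N + M} - {..N} \<times> {..M}. (case i of (r, s) \<Rightarrow> g r s) = 0"
    proof
      fix i assume "i \<in> {(r, s). r + s \<le> N + M} - {..N} \<times> {..M}"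
      then obtain r s where "i = (r, s)" and "N < r \<or> M < s" by (cases i) (auto simp: not_le)
      then show "(case i of (r, s) \<Rightarrow> g r s) = 0" by (auto simp: g_def binomial_eq_0)
    qed
  qed auto
  also have "\<dots> = binom_eval2 (\<lambda>r s. coeff p (r + s)) N M"
    by (simp add: binom_eval2_def g_def sum.cartesian_product)
  finally show ?thesis .
qed

lemma binom_eval_product:
  "binom_eval p N * binom_eval q M = binom_eval2 (\<lambda>r s. coeff p r * coeff q s) N M"
  by (simp add: binom_eval_def binom_eval2_def sum_product algebra_simps)

lemma binom_eval2_add: "binom_eval2 (\<lambda>r s. c r s + d r s) N M = binom_eval2 c N M + binom_eval2 d N M"
  by (simp add: binom_eval2_def algebra_simps sum.distrib)

lemma binom_eval2_sum_mset:
  "binom_eval2 (\<lambda>r s. sum_mset (image_mset (\<lambda>x. f x r s) C)) N M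
   = sum_mset (image_mset (\<lambda>x. binom_eval2 (f x) N M) C)"
  by (induction C) (simp_all add: binom_eval2_add, simp add: binom_eval2_def)

lemma mult_pairs_add_left [simp]:
  "mult_pairs (add_mset a A) B = image_mset (\<lambda>(v, w). (fst a + v, snd a + w)) B + mult_pairs A B"
  by (cases a) (simp add: mult_pairs_def)

lemma mult_pairs_empty_left [simp]: "mult_pairs {#} B = {#}"
  by (simp add: mult_pairs_def)

lemma mult_pairs_empty_right [simp]: "mult_pairs A {#} = {#}"
  by (induction A) auto

lemma mult_pairs_add_right [simp]:
  "mult_pairs A (add_mset b B) = image_mset (\<lambda>(v, w). (v + fst b, w + snd b)) A + mult_pairs A B"
  by (induction A) (auto split: prod.splits)

lemma mult_pairs_union_left: "mult_pairs (A1 + A2) B = mult_pairs A1 B + mult_pairs A2 B"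
  by (simp add: mult_pairs_def)

lemma mult_pairs_commute: "mult_pairs A B = mult_pairs B A"
  by (induction A) (auto simp: add_ac split: prod.splits intro!: image_mset_cong)

lemma mult_pairs_translate:
  "mult_pairs (image_mset (\<lambda>(v', w'). (v + v', w + w')) B) C
   = image_mset (\<lambda>(v', w'). (v + v', w + w')) (mult_pairs B C)"
  by (induction B)
     (auto simp: add_ac mult_pairs_def image_mset.compositionality comp_def
           split: prod.splits intro!: image_mset_cong)

lemma mult_pairs_assoc: "mult_pairs (mult_pairs A B) C = mult_pairs A (mult_pairs B C)"
  by (induction A) (auto simp: mult_pairs_union_left mult_pairs_translate split: prod.splits)

interpretation mult_pairs: comp_fun_commute mult_pairs
  by unfold_locales (simp add: fun_eq_iff, metis mult_pairs_assoc mult_pairs_commute)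

lemma sum_mult_pairs:
  fixes F G :: "forest \<Rightarrow> 'k::comm_ring_1"
  assumes F: "\<And>a b. F (a + b) = F a * F b" and G: "\<And>a b. G (a + b) = G a * G b"
  shows "sum_mset (image_mset (\<lambda>(v, w). F v * G w) (mult_pairs A B))
       = sum_mset (image_mset (\<lambda>(v, w). F v * G w) A) * sum_mset (image_mset (\<lambda>(v, w). F v * G w) B)"
proof (induction A)
  case (add a A)
  have "sum_mset (image_mset (\<lambda>(v, w). F v * G w) (image_mset (\<lambda>(v, w). (fst a + v, snd a + w)) B))
      = F (fst a) * G (snd a) * sum_mset (image_mset (\<lambda>(v, w). F v * G w) B)"
    by (simp add: sum_mset_distrib_left image_mset.compositionality comp_def F G case_prod_beta
                  algebra_simps)
  with add show ?case by (cases a) (simp add: algebra_simps)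
qed simp

lemma cop_forest_empty [simp]: "cop_forest {#} = {#({#}, {#})#}"
  by (simp add: cop_forest_def)

lemma cop_forest_add: "cop_forest (add_mset t u) = mult_pairs (cop_tree t) (cop_forest u)"
  by (simp add: cop_forest_def)

lemma cop_tree_Node:
  "cop_tree (Node f) = {#({#Node f#}, {#})#} + image_mset (\<lambda>(v, w). (v, {#Node w#})) (cop_forest f)"
  by (simp only: cop_tree.simps cop_forest_def)

declare cop_tree.simps [simp del]

subsection \<open>Lambda is a coalgebra morphism\<close>

lemma Lambda_empty [simp]: "Lambda {#} = 1"
  by (simp add: Lambda_def)

lemma Lambda_add: "Lambda (add_mset t u) = diamond (Lambda_tree t) (Lambda u)"
  by (simp add: Lambda_def)

lemma Lambda_single: "Lambda {#t#} = Lambda_tree t"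
  by (simp add: Lambda_def diamond_one)

lemma Lambda_tree_Node: "Lambda_tree (Node f) = Lambda f * [:0, 1:]"
  by (simp only: Lambda_def Lambda_tree.simps)

declare Lambda_tree.simps [simp del]

lemma binom_eval_Lambda_union:
  "binom_eval (Lambda (u + v)) N = binom_eval (Lambda u) N * binom_eval (Lambda v) N"
  by (induction u) (simp_all add: Lambda_def binom_eval_one binom_eval_diamond)

lemma binom_eval_Lambda_Node: "binom_eval (Lambda_tree (Node f)) N = (\<Sum>K<N. binom_eval (Lambda f) K)"
  unfolding Lambda_tree_Node by (rule binom_eval_times_x)

definition cut_sum :: "nat \<Rightarrow> nat \<Rightarrow> (forest \<times> forest) multiset \<Rightarrow> 'k::field" where
  "cut_sum N M C = sum_mset (image_mset (\<lambda>(v, w). binom_eval (Lambda v) N * binom_eval (Lambda w) M) C)"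

text \<open>If the compatibility of Lambda with the coproduct holds on trees, it holds on forests,
  because both sides are multiplicative.\<close>
lemma Lambda_cut_forest_from_trees:
  assumes "\<forall>t\<in>#u. \<forall>N M. binom_eval (Lambda_tree t) (N + M) = (cut_sum N M (cop_tree t) :: 'k::field)"
  shows "binom_eval (Lambda u) (N + M) = (cut_sum N M (cop_forest u) :: 'k)"
  using assms
proof (induction u arbitrary: N M)
  case (add t u)
  have "cut_sum N M (cop_forest (add_mset t u)) = (cut_sum N M (cop_tree t) :: 'k) * cut_sum N M (cop_forest u)"
    unfolding cop_forest_add cut_sum_def by (rule sum_mult_pairs) (simp_all add: binom_eval_Lambda_union)
  with add show ?case by (simp add: Lambda_add binom_eval_diamond)
qed (simp add: cut_sum_def Lambda_def binom_eval_one)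

lemma sum_lessThan_add: "(\<Sum>K<N + (M::nat). g K) = (\<Sum>K<N. g K) + (\<Sum>K<M. g (N + K))"
  by (induction M) (simp_all add: algebra_simps)

lemma sum_mset_sum_swap:
  "(\<Sum>i\<in>I. sum_mset (image_mset (f i) C)) = sum_mset (image_mset (\<lambda>x. \<Sum>i\<in>I. f i x) C)"
  by (induction C) (simp_all add: sum.distrib)

text \<open>The recursion B_+ on the two sides: the cut keeping the whole tree contributes the
  evaluation at N, the cuts below the root contribute the remaining summands K = N, ..., N+M-1.\<close>
lemma Lambda_cut_tree: "binom_eval (Lambda_tree t) (N + M) = (cut_sum N M (cop_tree t) :: 'k::field)"
proof (induction t arbitrary: N M)
  case (Node f)
  have IH: "binom_eval (Lambda f) (N + M) = (cut_sum N M (cop_forest f) :: 'k)" for N M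
    by (rule Lambda_cut_forest_from_trees) (use Node in auto)
  have "cut_sum N M (cop_tree (Node f)) = binom_eval (Lambda_tree (Node f)) N
      + sum_mset (image_mset (\<lambda>x. binom_eval (Lambda (fst x)) N
                                   * binom_eval (Lambda_tree (Node (snd x))) M) (cop_forest f))"
    by (simp add: cut_sum_def cop_tree_Node Lambda_single binom_eval_one
                  image_mset.compositionality comp_def case_prod_beta)
  also have "sum_mset (image_mset (\<lambda>x. binom_eval (Lambda (fst x)) N
                                   * binom_eval (Lambda_tree (Node (snd x))) M) (cop_forest f))
      = (\<Sum>K<M. (cut_sum N K (cop_forest f) :: 'k))"
    by (simp add: binom_eval_Lambda_Node cut_sum_def sum_mset_sum_swap sum_distrib_left case_prod_beta)
  also have "\<dots> = (\<Sum>K<M. binom_eval (Lambda f) (N + K))"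
    by (simp add: IH)
  finally show ?case by (simp add: binom_eval_Lambda_Node sum_lessThan_add)
qed

lemma Lambda_cut_forest: "binom_eval (Lambda u) (N + M) = (cut_sum N M (cop_forest u) :: 'k::field)"
  by (rule Lambda_cut_forest_from_trees) (simp add: Lambda_cut_tree)

text \<open>Coalgebra morphism property in coordinates: (Lambda \<otimes> Lambda) \<circ> \<Delta>_CK = \<Delta>_A \<circ> Lambda.\<close>
lemma coeff_Lambda_cut:
  "coeff (Lambda u :: 'k::field poly) (r + s)
   = sum_mset (image_mset (\<lambda>(v, w). coeff (Lambda v :: 'k poly) r * coeff (Lambda w :: 'k poly) s)
                          (cop_forest u))"
proof (rule binom_eval2_inj[where c = "\<lambda>r s. coeff (Lambda u) (r + s)"])
  fix N M
  show "binom_eval2 (\<lambda>r s. coeff (Lambda u :: 'k poly) (r + s)) N M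
      = binom_eval2 (\<lambda>r s. sum_mset (image_mset (\<lambda>(v, w). coeff (Lambda v :: 'k poly) r
                                                          * coeff (Lambda w :: 'k poly) s)
                                                (cop_forest u))) N M"
    by (simp add: binom_eval_shift[symmetric] Lambda_cut_forest cut_sum_def case_prod_unfold
                  binom_eval2_sum_mset binom_eval_product)
qed

subsection \<open>Convolution powers of the infinitesimal characters\<close>

text \<open>On A, convolving with deltaA - epsA shifts the degree by one, so its n-th power is
  the dual basis vector of x^n.\<close>
lemma convA_delta_minus_eps:
  "convA (\<lambda>m. deltaA m - epsA m) g m = (if m = 0 then 0 else g (m - 1))"
proof -
  have "convA (\<lambda>m. deltaA m - epsA m) g m = (\<Sum>r\<le>m. if r = 1 then g (m - r) else 0)"
    unfolding convA_def by (rule sum.cong) (auto simp: deltaA_def epsA_def)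
  then show ?thesis by simp
qed

lemma convA_pow_delta_minus_eps:
  "convA_pow (\<lambda>m. deltaA m - epsA m) n = (\<lambda>m. if m = n then 1 else 0)"
proof (induction n)
  case 0
  show ?case by (simp add: fun_eq_iff epsA_def)
next
  case (Suc n)
  then show ?case by (auto simp: fun_eq_iff convA_delta_minus_eps)
qed

text \<open>The counit and delta of H_CK are Lambda followed by evaluation at 0 and at 1:
  every nonempty tree evaluates to 0 at 0, and only the single vertex evaluates to 1 at 1.\<close>
lemma binom_eval_Lambda_0: "binom_eval (Lambda u :: 'k::field poly) 0 = epsCK u"
proof (induction u)
  case (add t u)
  obtain f where "t = Node f" by (cases t)
  have "binom_eval (Lambda (add_mset t u) :: 'k poly) 0
      = binom_eval (Lambda_tree t :: 'k poly) 0 * binom_eval (Lambda u :: 'k poly) 0"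
    using binom_eval_Lambda_union[of "{#t#}" u 0] by (simp add: Lambda_single)
  with \<open>t = Node f\<close> show ?case by (simp add: binom_eval_Lambda_Node epsCK_def)
qed (simp add: binom_eval_one epsCK_def)

lemma binom_eval_Lambda_1: "binom_eval (Lambda u :: 'k::field poly) 1 = deltaCK u"
proof (induction u)
  case (add t u)
  obtain f where "t = Node f" by (cases t)
  have "binom_eval (Lambda (add_mset t u) :: 'k poly) 1
      = binom_eval (Lambda_tree t :: 'k poly) 1 * binom_eval (Lambda u :: 'k poly) 1"
    using binom_eval_Lambda_union[of "{#t#}" u 1] by (simp add: Lambda_single)
  with add \<open>t = Node f\<close> show ?case
    by (simp add: binom_eval_Lambda_Node binom_eval_Lambda_0 deltaCK_def delta_tree_def epsCK_def)
qed (simp add: binom_eval_one deltaCK_def)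

lemma deltaCK_minus_epsCK:
  "(\<lambda>v. deltaCK v - epsCK v) = (\<lambda>v. coeff (Lambda v :: 'k::field poly) 1)"
proof
  fix v
  show "deltaCK v - epsCK v = coeff (Lambda v :: 'k poly) 1"
    using binom_eval_Lambda_0[of v, where 'k = 'k] binom_eval_Lambda_1[of v, where 'k = 'k]
    unfolding binom_eval_0 binom_eval_1 by (simp add: algebra_simps)
qed

text \<open>By the coalgebra morphism property, the n-th power of delta - eps is the coefficient
  of x^n in Lambda.\<close>
lemma convCK_pow_delta_minus_eps:
  "convCK_pow (\<lambda>v. deltaCK v - epsCK v) n u = coeff (Lambda u :: 'k::field poly) n"
  unfolding deltaCK_minus_epsCK
proof (induction n arbitrary: u)
  case 0
  show ?case using binom_eval_Lambda_0[of u, where 'k = 'k] by (simp add: binom_eval_0)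
next
  case (Suc n)
  have "convCK_pow (\<lambda>v. coeff (Lambda v :: 'k poly) 1) (Suc n) u
      = sum_mset (image_mset (\<lambda>(v, w). coeff (Lambda v :: 'k poly) 1 * coeff (Lambda w :: 'k poly) n)
                             (cop_forest u))"
    by (simp only: convCK_pow.simps convCK_def Suc.IH)
  also have "\<dots> = coeff (Lambda u) (Suc n)"
    using coeff_Lambda_cut[of u 1 n, where 'k = 'k] by simp
  finally show ?case .
qed

subsection \<open>The logarithms\<close>

lemma log_sum_finite:
  fixes a :: "nat \<Rightarrow> 'k::field"
  assumes "\<And>n. D < n \<Longrightarrow> a n = 0"
  shows "(\<Sum>n\<in>{n. 1 \<le> n \<and> a n \<noteq> 0}. a n) = (\<Sum>n = 1..D. a n)"
proof (rule sum.mono_neutral_left)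
  show "{n. 1 \<le> n \<and> a n \<noteq> 0} \<subseteq> {1..D}"
    using assms by (auto intro: ccontr)
qed auto

lemma logA_deltaA:
  "logA (deltaA :: nat \<Rightarrow> 'k::field_char_0) m = (if m = 0 then 0 else (-1) ^ (m + 1) / of_nat m)"
proof -
  have "logA (deltaA :: nat \<Rightarrow> 'k) m
      = (\<Sum>n = 1..m. (-1) ^ (n + 1) / of_nat n * (if m = n then 1 else 0))"
    unfolding logA_def Let_def convA_pow_delta_minus_eps by (rule log_sum_finite) simp
  also have "\<dots> = (if m = 0 then 0 else (-1) ^ (m + 1) / of_nat m)"
    by (simp add: if_distrib[of "\<lambda>x. _ * x"] cong: if_cong)
  finally show ?thesis .
qed

lemma logCK_deltaCK:
  "logCK (deltaCK :: forest \<Rightarrow> 'k::field_char_0) u = lin_ext (logA deltaA) (Lambda u)"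
proof -
  define p where "p = (Lambda u :: 'k poly)"
  have "logCK (deltaCK :: forest \<Rightarrow> 'k) u = (\<Sum>n = 1..degree p. (-1) ^ (n + 1) / of_nat n * coeff p n)"
    unfolding logCK_def Let_def convCK_pow_delta_minus_eps p_def[symmetric]
    by (rule log_sum_finite) (simp add: coeff_eq_0)
  also have "\<dots> = (\<Sum>n\<le>degree p. coeff p n * logA deltaA n)"
    by (rule sum.mono_neutral_cong_left) (auto simp: logA_deltaA)
  finally show ?thesis by (simp add: lin_ext_def p_def)
qed

theorem mainTheorem16:
  shows "logA (deltaA :: nat \<Rightarrow> 'k::field_char_0) 0 = 0
    \<and> (\<forall>s\<ge>1. logA (deltaA :: nat \<Rightarrow> 'k) s = (-1) ^ (s + 1) / of_nat s)
    \<and> (\<forall>u. logCK (deltaCK :: forest \<Rightarrow> 'k) u = lin_ext (logA deltaA) (Lambda u))"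
  by (simp add: logA_deltaA logCK_deltaCK)

end
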